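(* In the setting described in the context, for every $(u_1,\dots,u_n)\in C(U,W,\alpha)$ and every $i\in[n-1]$, we have $[i+1,n]\subseteq\mathrm{fix}_{(\alpha_i,n]}(u_i,u_{i+1})$.
   Context: Permutations: for integers $a\le n$, $S_{[a,n]}$ is the set of bijections of $\mathbb Z$ fixing every integer outside $[a,n]$, one-line notation $[w(a),\dots,w(n)]$; $\tau_{i,j}$ swaps $i<j$, $u\tau_{i,j}=u\circ\tau_{i,j}$; $\ell(u)$ = number of inversions; $u\lessdot_k u\tau_{i,j}$ if $i\le k<j$ and $\ell(u\tau_{i,j})=\ell(u)+1$; $u\xrightarrow{k}w$ if there is a chain $u=v_1\lessdot_k\cdots\lessdot_k v_s=w$ ($s\ge1$), $v_{t+1}=v_t\tau_{i_t,j_t}$, with $v_1(i_1)<\cdots<v_{s-1}(i_{s-1})$. $\mathrm{fix}_I(u,v)=\{u(t):t\in I,\ u(t)=v(t)\}$. For $\beta=(\beta_1,\dots,\beta_m)$, $C(u,w,\beta)$ is the set of $(v_1,\dots,v_{m+1})$ with $v_1=u$, $v_{m+1}=w$, $v_i\xrightarrow{\beta_i}v_{i+1}$. Setting: fix $a\le 0<n$ and let $A=\{(r,c):1\le r\le n,\ a\le c\le r\}$. Let $\gamma=(\gamma_N,\gamma_E,\gamma_S,\gamma_W)$ be a boundary condition of $A$: $\gamma_N(c)$ (for columns $c\in[a,n]$) is the label of the pipe entering through the top edge of the top cell $(\max(c,1),c)$ of column $c$ or $\varnothing$; $\gamma_E(r)$ the label of the pipe entering through the right edge of $(r,r)$ or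 $\varnothing$; $\gamma_S(c)$ the label of the pipe exiting through the bottom edge of $(n,c)$ or $\varnothing$; $\gamma_W(r)$ that of the pipe exiting through the left edge of $(r,a)$ or $\varnothing$. Assume $\gamma_S(c)\ne\varnothing$ for all $c\in[a,n]$, $\gamma_W(r)=\varnothing$ and $\gamma_N(r)\neq\varnothing$ for $r\in[n]$, and the non-$\varnothing$ values of $\gamma_N,\gamma_E$ are exactly $a,\dots,n$, increasing along the order: top edges of columns $a,\dots,1$, right edge of row 1, top edge of column 2, right edge of row 2, …, top edge of column $n$, right edge of row $n$. (The values of $\gamma_S$ are then also exactly $a,\dots,n$.) Put $p_c=\gamma_N(c)$ ($c\in[n]$), $\alpha_i=p_{i+1}-1$, $\alpha=(\alpha_1,\dots,\alpha_{n-1})$. $P_r=\{w\in S_{[a,n]}:w(p_j)=j\ \forall j\in(r,n]\}$; $\iota_r:P_r\to S_{[a,r]}$ deletes the values $r+1,\dots,n$ from one-line notation. $W\in P_1$: $\iota_1(W)(\ell)=\gamma_N^{-1}(\ell)$ for $\ell\in[a,p_1]$ and $\iota_1(W)$ decreasing on $(p_1,1]$. $U\in S_{[a,n]}$: $U(\ell)=\gamma_S^{-1}(\ell)$ for $\ell\in[a,n]$. (Here $\gamma_N^{-1}(\ell)$, $\gamma_S^{-1}(\ell)$ denote the column with that value.) *)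

theory Defs
  imports Main "HOL-Combinatorics.Transposition"
begin

definition perm_on_interval :: "int \<Rightarrow> int \<Rightarrow> (int \<Rightarrow> int) \<Rightarrow> bool" where
  "perm_on_interval a n w \<longleftrightarrow> bij w \<and> (\<forall>x. x < a \<or> n < x \<longrightarrow> w x = x)"

definition inv_len :: "(int \<Rightarrow> int) \<Rightarrow> nat" where
  "inv_len u = card {(i, j). i < j \<and> u j < u i}"

definition tmul :: "(int \<Rightarrow> int) \<Rightarrow> int \<Rightarrow> int \<Rightarrow> (int \<Rightarrow> int)" where
  "tmul u i j = u \<circ> transpose i j"

definition kcover :: "int \<Rightarrow> (int \<Rightarrow> int) \<Rightarrow> int \<Rightarrow> int \<Rightarrow> bool" where
  "kcover k u i j \<longleftrightarrow> i \<le> k \<and> k < j \<and> inv_len (tmul u i j) = inv_len u + 1"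

text \<open>u --k--> w: chain v_1 = u, ..., v_s = w (s >= 1), v_{t+1} = v_t tau_{i_t,j_t} covers,
  with v_1(i_1) < ... < v_{s-1}(i_{s-1}).  The list vs is (v_1,...,v_s), ps the list of pairs (i_t,j_t).\<close>
definition kchain :: "int \<Rightarrow> (int \<Rightarrow> int) \<Rightarrow> (int \<Rightarrow> int) \<Rightarrow> bool" where
  "kchain k u w \<longleftrightarrow> (\<exists>vs ps. vs \<noteq> [] \<and> hd vs = u \<and> last vs = w \<and>
      length ps = length vs - 1 \<and>
      (\<forall>t < length ps. kcover k (vs ! t) (fst (ps ! t)) (snd (ps ! t)) \<and>
                       vs ! Suc t = tmul (vs ! t) (fst (ps ! t)) (snd (ps ! t))) \<and>
      sorted_wrt (<) (map (\<lambda>t. (vs ! t) (fst (ps ! t))) [0..<length ps]))"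

definition fixI :: "int set \<Rightarrow> (int \<Rightarrow> int) \<Rightarrow> (int \<Rightarrow> int) \<Rightarrow> int set" where
  "fixI I u v = {u t | t. t \<in> I \<and> u t = v t}"

text \<open>C(u,w,beta): tuples (v_1,...,v_{m+1}) represented as lists of length m+1.\<close>
definition Cset :: "(int \<Rightarrow> int) \<Rightarrow> (int \<Rightarrow> int) \<Rightarrow> int list \<Rightarrow> (int \<Rightarrow> int) list set" where
  "Cset u w \<beta> = {vs. length vs = length \<beta> + 1 \<and> vs ! 0 = u \<and> vs ! length \<beta> = w \<and>
      (\<forall>i < length \<beta>. kchain (\<beta> ! i) (vs ! i) (vs ! Suc i))}"

text \<open>Sequence of boundary edges of A in the order: top edges of columns a,...,1, right edge of
  row 1, top edge of column 2, right edge of row 2, ..., top edge of column n, right edge of row n.\<close>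
definition NE_sequence :: "int \<Rightarrow> int \<Rightarrow> (int \<Rightarrow> int option) \<Rightarrow> (int \<Rightarrow> int option) \<Rightarrow> int option list" where
  "NE_sequence a n gN gE = map gN [a..1] @ [gE 1] @ concat (map (\<lambda>r. [gN r, gE r]) [2..n])"

text \<open>Standing assumptions on the boundary condition gamma = (gN, gE, gS, gW); None encodes the empty label.
  The last conjunct records that the values of gS are exactly a,...,n.\<close>
definition good_boundary :: "int \<Rightarrow> int \<Rightarrow> (int \<Rightarrow> int option) \<Rightarrow> (int \<Rightarrow> int option) \<Rightarrow>
    (int \<Rightarrow> int option) \<Rightarrow> (int \<Rightarrow> int option) \<Rightarrow> bool" where
  "good_boundary a n gN gE gS gW \<longleftrightarrow>
     (\<forall>c \<in> {a..n}. gS c \<noteq> None) \<and>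
     (\<forall>r \<in> {1..n}. gW r = None \<and> gN r \<noteq> None) \<and>
     map the (filter (\<lambda>x. x \<noteq> None) (NE_sequence a n gN gE)) = [a..n] \<and>
     bij_betw (\<lambda>c. the (gS c)) {a..n} {a..n}"

definition col_of :: "int \<Rightarrow> int \<Rightarrow> (int \<Rightarrow> int option) \<Rightarrow> int \<Rightarrow> int" where
  "col_of a n g l = (THE c. c \<in> {a..n} \<and> g c = Some l)"

definition pcol :: "(int \<Rightarrow> int option) \<Rightarrow> int \<Rightarrow> int" where
  "pcol gN c = the (gN c)"

definition alpha_seq :: "int \<Rightarrow> (int \<Rightarrow> int option) \<Rightarrow> int list" where
  "alpha_seq n gN = map (\<lambda>i. pcol gN (i + 1) - 1) [1..n - 1]"

definition Pset :: "int \<Rightarrow> int \<Rightarrow> (int \<Rightarrow> int option) \<Rightarrow> int \<Rightarrow> (int \<Rightarrow> int) set" where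
  "Pset a n gN r = {w. perm_on_interval a n w \<and> (\<forall>j \<in> {r<..n}. w (pcol gN j) = j)}"

text \<open>iota_r: delete the values r+1,...,n from the one-line notation [w(a),...,w(n)] and read
  the result as the one-line notation of a permutation in S_[a,r].\<close>
definition iota :: "int \<Rightarrow> int \<Rightarrow> int \<Rightarrow> (int \<Rightarrow> int) \<Rightarrow> (int \<Rightarrow> int)" where
  "iota a n r w = (\<lambda>l. if a \<le> l \<and> l \<le> r
      then filter (\<lambda>v. v \<le> r) (map w [a..n]) ! nat (l - a) else l)"

end

theory Submission
  imports Defs "HOL-Combinatorics.Permutations"
begin

(* A k-Bruhat cover u \<lessdot>_k u\<tau>_{i,j} has u(i) < u(j), so along a k-chain the values in positions
   \<le> k only grow, those in positions > k only shrink, and no value \<ge> x is moved if all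
   final values in positions \<le> k are smaller than x. Since \<alpha> is weakly increasing, the
   values in positions \<le> \<alpha>_i after step i of the chain U \<rightarrow> W are bounded by those of W,
   which are \<le> i because W(p_j) = j for j > 1 and p is increasing. So every value
   v \<in> [i+1,n] stays in place during step i (from u_{i-1} to u_i), and its position lies in (\<alpha>_i,n]: it is
   > \<alpha>_i by the same bound, and \<le> n because the values in positions > n never drop below
   those of W, which fixes them. *)

text \<open>The permutations along a k-chain need not stay in \<open>S_[a,n]\<close>, only in some \<open>S_[c,d]\<close>.\<close>

definition interval_perm :: "(int \<Rightarrow> int) \<Rightarrow> bool" where
  "interval_perm u \<longleftrightarrow> (\<exists>c d. u permutes {c..d})"

lemma perm_on_interval_iff_permutes: "perm_on_interval a n u \<longleftrightarrow> u permutes {a..n}"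
  unfolding perm_on_interval_def permutes_def bij_iff by auto

lemma interval_perm_bij: "interval_perm u \<Longrightarrow> bij u"
  unfolding interval_perm_def using permutes_bij by blast

lemma interval_perm_tmul:
  assumes "interval_perm u" shows "interval_perm (tmul u i j)"
proof -
  obtain c d where u: "u permutes {c..d}" using assms interval_perm_def by blast
  let ?S = "{min c (min i j)..max d (max i j)}"
  have "transpose i j permutes ?S" by (rule permutes_swap_id) auto
  moreover have "u permutes ?S" by (rule permutes_subset[OF u]) auto
  ultimately show ?thesis unfolding interval_perm_def tmul_def by (blast intro: permutes_compose)
qed

lemma finite_inversions:
  assumes "interval_perm u" shows "finite {(i, j). i < j \<and> u j < u i}"
proof -
  obtain c d where u: "u permutes {c..d}" using assms interval_perm_def by blast
  have "{(i, j). i < j \<and> u j < u i} \<subseteq> {c..d} \<times> {c..d}"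
    using permutes_in_image[OF u] permutes_not_in[OF u]
    by (clarsimp, smt (verit, best) atLeastAtMost_iff)
  then show ?thesis by (rule finite_subset) simp
qed

lemma inv_len_less_tmul:
  assumes "interval_perm u" "i < j" "u i < u j"
  shows "inv_len u < inv_len (tmul u i j)"
proof -
  let ?s = "transpose i j"
  define I where "I = {(x, y). x < y \<and> u y < u x}"
  define J where "J = {(x, y). x < y \<and> (u \<circ> ?s) y < (u \<circ> ?s) x}"
  have "finite J"
    using finite_inversions[OF interval_perm_tmul[OF assms(1)]] by (simp add: J_def tmul_def)
  \<comment> \<open>Conjugating by the transposition maps inversions of u to inversions of u \<circ> s, except for
    pairs with exactly one end strictly between i and j, which are kept.\<close>
  define g where "g = (\<lambda>(x, y). if (x = i \<and> i < y \<and> y < j) \<or> (y = j \<and> i < x \<and> x < j)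
     then (x, y) else (?s x, ?s y))"
  have "inj_on g I"
    by (rule inj_onI) (use assms in \<open>auto simp: g_def I_def transpose_def split: if_splits\<close>)
  moreover have "g ` I \<subseteq> J - {(i, j)}"
    using assms by (auto simp: g_def I_def J_def transpose_def split: if_splits)
  ultimately have "card I \<le> card (J - {(i, j)})"
    using \<open>finite J\<close> by (simp add: card_inj_on_le)
  moreover have "(i, j) \<in> J" using assms by (simp add: J_def)
  ultimately have "card I < card J"
    using \<open>finite J\<close> by (metis card_Diff1_less le_less_trans)
  then show ?thesis by (simp add: inv_len_def tmul_def I_def J_def)
qed

lemma kcover_ascent:
  assumes "interval_perm u" "kcover k u i j"
  shows "u i < u j"
proof (rule ccontr)
  assume "\<not> u i < u j"
  moreover have "i < j" and len: "inv_len (tmul u i j) = inv_len u + 1"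
    using assms(2) by (auto simp: kcover_def)
  moreover have "u i \<noteq> u j"
    using interval_perm_bij[OF assms(1)] \<open>i < j\<close> by (metis bij_pointE less_irrefl)
  ultimately have "tmul u i j i < tmul u i j j" by (simp add: tmul_def)
  from inv_len_less_tmul[OF interval_perm_tmul[OF assms(1)] \<open>i < j\<close> this]
  have "inv_len (tmul u i j) < inv_len (tmul (tmul u i j) i j)" .
  moreover have "tmul (tmul u i j) i j = u" by (simp add: tmul_def comp_assoc)
  ultimately show False using len by simp
qed

definition kstep :: "int \<Rightarrow> (int \<Rightarrow> int) \<Rightarrow> (int \<Rightarrow> int) \<Rightarrow> bool" where
  "kstep k u v \<longleftrightarrow> (\<exists>i j. kcover k u i j \<and> v = tmul u i j)"

lemma kchain_imp_kstep_star:
  assumes "kchain k u w" shows "(kstep k)\<^sup>*\<^sup>* u w"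
proof -
  obtain vs ps where vs: "vs \<noteq> []" "hd vs = u" "last vs = w" "length ps = length vs - 1"
    and steps: "\<forall>t < length ps. kcover k (vs ! t) (fst (ps ! t)) (snd (ps ! t)) \<and>
                       vs ! Suc t = tmul (vs ! t) (fst (ps ! t)) (snd (ps ! t))"
    using assms kchain_def by blast
  have "(kstep k)\<^sup>*\<^sup>* (vs ! 0) (vs ! t)" if "t \<le> length ps" for t
    using that
  proof (induction t)
    case (Suc t)
    then have "kstep k (vs ! t) (vs ! Suc t)" using steps unfolding kstep_def by (meson Suc_le_lessD)
    with Suc show ?case by (meson Suc_leD rtranclp.rtrancl_into_rtrancl)
  qed simp
  from this[of "length ps"] show ?thesis using vs by (simp add: hd_conv_nth last_conv_nth)
qed

lemma kstep_star_interval_perm: "(kstep k)\<^sup>*\<^sup>* u v \<Longrightarrow> interval_perm u \<Longrightarrow> interval_perm v"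
  by (induction rule: rtranclp_induct) (auto simp: kstep_def intro: interval_perm_tmul)

lemma kstep_mono:
  assumes "kstep k u v" "interval_perm u"
  shows "t \<le> k \<Longrightarrow> u t \<le> v t" and "k < t \<Longrightarrow> v t \<le> u t"
proof -
  obtain i j where c: "kcover k u i j" and v: "v = tmul u i j" using assms(1) kstep_def by auto
  have "i \<le> k" "k < j" using c kcover_def by auto
  moreover have "u i < u j" using kcover_ascent[OF assms(2) c] .
  ultimately show "t \<le> k \<Longrightarrow> u t \<le> v t" and "k < t \<Longrightarrow> v t \<le> u t"
    by (auto simp: v tmul_def transpose_def)
qed

lemma kstep_star_mono:
  assumes "(kstep k)\<^sup>*\<^sup>* u v" "interval_perm u"
  shows "t \<le> k \<Longrightarrow> u t \<le> v t" and "k < t \<Longrightarrow> v t \<le> u t"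
  using assms(1)
proof (induction rule: rtranclp_induct)
  case (step v w)
  have "interval_perm v" using kstep_star_interval_perm step.hyps(1) assms(2) .
  from kstep_mono[OF step.hyps(2) this] step.IH
  show "t \<le> k \<Longrightarrow> u t \<le> w t" and "k < t \<Longrightarrow> w t \<le> u t" by force+
qed simp_all

lemma kstep_fixes_large_values:
  assumes "kstep k u v" "interval_perm u" "\<forall>t\<le>k. v t < x" "x \<le> u t"
  shows "v t = u t"
proof -
  obtain i j where c: "kcover k u i j" and v: "v = tmul u i j" using assms(1) kstep_def by auto
  have "i \<le> k" "k < j" using c kcover_def by auto
  moreover have "u i < u j" using kcover_ascent[OF assms(2) c] .
  moreover have "v i = u j" by (simp add: v tmul_def)
  ultimately have "u i < x" "u j < x" using assms(3) by force+
  with assms(4) show ?thesis by (auto simp: v tmul_def transpose_def)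
qed

lemma kstep_star_fixes_large_values:
  assumes "(kstep k)\<^sup>*\<^sup>* u v" "interval_perm u" "\<forall>t\<le>k. v t < x" "x \<le> u t"
  shows "v t = u t"
  using assms
proof (induction arbitrary: t rule: converse_rtranclp_induct)
  case (step u w)
  have "interval_perm w" using step.hyps(1) step.prems(1) kstep_star_interval_perm
    by (meson r_into_rtranclp)
  moreover have "\<forall>t\<le>k. w t < x"
    using kstep_star_mono(1)[OF step.hyps(2) \<open>interval_perm w\<close>] step.prems(2) by force
  ultimately show ?case
    using kstep_fixes_large_values[OF step.hyps(1) step.prems(1)] step.IH step.prems by metis
qed simp

lemma kstep_sequence_interval_perm:
  assumes "\<forall>m<N. (kstep (ks ! m))\<^sup>*\<^sup>* (vs ! m) (vs ! Suc m)" "interval_perm (vs ! 0)" "m \<le> N"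
  shows "interval_perm (vs ! m)"
  using assms(3)
proof (induction m)
  case (Suc m)
  then have "m < N" by simp
  with Suc show ?case using kstep_star_interval_perm[OF assms(1)[rule_format, OF \<open>m < N\<close>]] by simp
qed (use assms(2) in simp)

lemma kstep_sequence_mono:
  assumes chain: "\<forall>m<N. (kstep (ks ! m))\<^sup>*\<^sup>* (vs ! m) (vs ! Suc m)" "interval_perm (vs ! 0)"
    and "q \<le> r" "r \<le> N"
  shows "\<forall>m\<in>{q..<r}. t \<le> ks ! m \<Longrightarrow> (vs ! q) t \<le> (vs ! r) t"
    and "\<forall>m\<in>{q..<r}. ks ! m < t \<Longrightarrow> (vs ! r) t \<le> (vs ! q) t"
  using assms(3,4)
proof (induction r rule: dec_induct)
  case (step m)
  have "m < N" using step.hyps assms(4) by simp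
  then have "interval_perm (vs ! m)" using kstep_sequence_interval_perm[OF chain] by simp
  note mono = kstep_star_mono[OF chain(1)[rule_format, OF \<open>m < N\<close>] this]
  show "(vs ! q) t \<le> (vs ! Suc m) t" if low: "\<forall>m'\<in>{q..<Suc m}. t \<le> ks ! m'"
  proof -
    have "(vs ! q) t \<le> (vs ! m) t" using step.IH(1) low \<open>m < N\<close> by simp
    also have "\<dots> \<le> (vs ! Suc m) t" using mono(1) low step.hyps(1) by simp
    finally show ?thesis .
  qed
  show "(vs ! Suc m) t \<le> (vs ! q) t" if high: "\<forall>m'\<in>{q..<Suc m}. ks ! m' < t"
  proof -
    have "(vs ! Suc m) t \<le> (vs ! m) t" using mono(2) high step.hyps(1) by simp
    also have "\<dots> \<le> (vs ! q) t" using step.IH(2) high \<open>m < N\<close> by simp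
    finally show ?thesis .
  qed
qed simp_all

lemma kstep_sequence_fixI:
  assumes chain: "\<forall>m<N. (kstep (ks ! m))\<^sup>*\<^sup>* (vs ! m) (vs ! Suc m)" "interval_perm (vs ! 0)"
    and "sorted ks" "length ks = N" "q < N"
    and below: "\<forall>t\<le>ks ! q. (vs ! N) t < v"
    and above: "\<forall>m<N. ks ! m \<le> b" "\<forall>t>b. t \<le> (vs ! N) t"
    and "v \<le> b"
  shows "v \<in> fixI {ks ! q<..b} (vs ! q) (vs ! Suc q)"
proof -
  have step: "(kstep (ks ! q))\<^sup>*\<^sup>* (vs ! q) (vs ! Suc q)" using chain(1) \<open>q < N\<close> by simp
  have perm: "interval_perm (vs ! q)"
    using kstep_sequence_interval_perm[OF chain] \<open>q < N\<close> by simp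
  obtain t where t: "(vs ! q) t = v" using interval_perm_bij[OF perm] by (metis bij_pointE)
  have below_next: "(vs ! Suc q) t' < v" if "t' \<le> ks ! q" for t'
  proof -
    have "\<forall>m\<in>{Suc q..<N}. t' \<le> ks ! m"
    proof
      fix m assume "m \<in> {Suc q..<N}"
      then have "ks ! q \<le> ks ! m"
        using sorted_nth_mono[OF \<open>sorted ks\<close>, of q m] \<open>length ks = N\<close> by simp
      with that show "t' \<le> ks ! m" by simp
    qed
    then have "(vs ! Suc q) t' \<le> (vs ! N) t'"
      using kstep_sequence_mono(1)[OF chain, of "Suc q" N] \<open>q < N\<close> by simp
    also have "\<dots> < v" using below that by simp
    finally show ?thesis .
  qed
  have "ks ! q < t"
  proof (rule ccontr)
    assume "\<not> ks ! q < t"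
    then have "(vs ! q) t \<le> (vs ! Suc q) t" using kstep_star_mono(1)[OF step perm] by simp
    with below_next[of t] t \<open>\<not> ks ! q < t\<close> show False by simp
  qed
  moreover have "t \<le> b"
  proof (rule ccontr)
    assume "\<not> t \<le> b"
    then have "\<forall>m\<in>{q..<N}. ks ! m < t" using above(1) by fastforce
    then have "(vs ! N) t \<le> (vs ! q) t"
      using kstep_sequence_mono(2)[OF chain, of q N] \<open>q < N\<close> by simp
    moreover have "t \<le> (vs ! N) t" using above(2) \<open>\<not> t \<le> b\<close> by simp
    ultimately show False using t \<open>v \<le> b\<close> \<open>\<not> t \<le> b\<close> by simp
  qed
  moreover have "(vs ! Suc q) t = v"
    using kstep_star_fixes_large_values[OF step perm, of v t] below_next t by simp
  ultimately show ?thesis unfolding fixI_def using t by (intro CollectI exI[of _ t]) simp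
qed

lemma sorted_wrt_filter_iff:
  "sorted_wrt Q (filter P xs) \<longleftrightarrow> sorted_wrt (\<lambda>x y. P x \<longrightarrow> P y \<longrightarrow> Q x y) xs"
  by (induction xs) auto

lemma sorted_wrt_concat_map_pair:
  "sorted_wrt R (concat (map (\<lambda>x. [f x, g x]) xs)) \<Longrightarrow> sorted_wrt R (map f xs)"
  by (induction xs) (auto simp: sorted_wrt_append)

lemma sorted_wrt_upto_less:
  assumes "sorted_wrt P [i..j]" "i \<le> x" "x < y" "y \<le> j"
  shows "P x y"
proof -
  have "sorted_wrt P ([i..x] @ [x + 1..j])" using assms upto_split2[of i x j] by simp
  then show ?thesis using assms by (simp add: sorted_wrt_append)
qed

lemma NE_sequence_eq:
  assumes "a \<le> 0" "1 \<le> n"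
  shows "NE_sequence a n gN gE = map gN [a..0] @ concat (map (\<lambda>r. [gN r, gE r]) [1..n])"
  using assms by (simp add: NE_sequence_def upto_rec1[of 1 n] upto_rec2[of a 1])

lemma good_boundary_sorted:
  assumes "good_boundary a n gN gE gS gW"
  shows "sorted_wrt (\<lambda>x y. x \<noteq> None \<longrightarrow> y \<noteq> None \<longrightarrow> the x < the y) (NE_sequence a n gN gE)"
proof -
  have "sorted_wrt (<) (map the (filter (\<lambda>x. x \<noteq> None) (NE_sequence a n gN gE)))"
    using assms unfolding good_boundary_def by (metis sorted_wrt_upto)
  then show ?thesis by (simp add: sorted_wrt_map sorted_wrt_filter_iff)
qed

lemma pcol_less_pcol:
  assumes "good_boundary a n gN gE gS gW" "a \<le> 0" "1 \<le> c" "c < c'" "c' \<le> n"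
  shows "pcol gN c < pcol gN c'"
proof -
  let ?R = "\<lambda>x y. x \<noteq> None \<longrightarrow> y \<noteq> None \<longrightarrow> the x < the y"
  have "1 \<le> n" using assms(3-5) by simp
  then have "sorted_wrt ?R (concat (map (\<lambda>r. [gN r, gE r]) [1..n]))"
    using good_boundary_sorted[OF assms(1)] NE_sequence_eq[OF assms(2)]
    by (simp add: sorted_wrt_append)
  then have "sorted_wrt ?R (map gN [1..n])" by (rule sorted_wrt_concat_map_pair)
  then have "gN c \<noteq> None \<longrightarrow> gN c' \<noteq> None \<longrightarrow> the (gN c) < the (gN c')"
    using sorted_wrt_upto_less assms(3-5) by (fastforce simp: sorted_wrt_map)
  moreover have "gN c \<noteq> None" "gN c' \<noteq> None"
    using assms(1,3-5) unfolding good_boundary_def by auto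
  ultimately show ?thesis by (simp add: pcol_def)
qed

lemma pcol_le:
  assumes "good_boundary a n gN gE gS gW" "a \<le> 0" "1 \<le> c" "c \<le> n"
  shows "pcol gN c \<le> n"
proof -
  have "gN c \<in> set (NE_sequence a n gN gE)" using NE_sequence_eq[OF assms(2)] assms(3,4) by force
  moreover have "gN c \<noteq> None" using assms(1,3,4) unfolding good_boundary_def by auto
  ultimately have "pcol gN c \<in> set (map the (filter (\<lambda>x. x \<noteq> None) (NE_sequence a n gN gE)))"
    by (force simp: pcol_def)
  moreover have "map the (filter (\<lambda>x. x \<noteq> None) (NE_sequence a n gN gE)) = [a..n]"
    using assms(1) unfolding good_boundary_def by blast
  ultimately have "pcol gN c \<in> set [a..n]" by metis
  then show ?thesis by simp
qed

lemma length_alpha_seq: "length (alpha_seq n gN) = nat (n - 1)"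
  by (simp add: alpha_seq_def)

lemma nth_alpha_seq: "m < nat (n - 1) \<Longrightarrow> alpha_seq n gN ! m = pcol gN (int m + 2) - 1"
  by (simp add: alpha_seq_def add.commute)

lemma sorted_alpha_seq:
  assumes "good_boundary a n gN gE gS gW" "a \<le> 0"
  shows "sorted (alpha_seq n gN)"
  unfolding alpha_seq_def sorted_map
proof (rule sorted_wrt_mono_rel[OF _ sorted_wrt_upto])
  fix x y assume "x \<in> set [1..n - 1]" "y \<in> set [1..n - 1]" "x < y"
  then show "pcol gN (x + 1) - 1 \<le> pcol gN (y + 1) - 1"
    using pcol_less_pcol[OF assms, of "x + 1" "y + 1"] by simp
qed

lemma alpha_seq_less:
  assumes "good_boundary a n gN gE gS gW" "a \<le> 0" "x \<in> set (alpha_seq n gN)"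
  shows "x < n"
proof -
  obtain m where "m \<in> {1..n - 1}" "x = pcol gN (m + 1) - 1"
    using assms(3) by (auto simp: alpha_seq_def)
  then show ?thesis using pcol_le[OF assms(1,2), of "m + 1"] by simp
qed

lemma Pset_value_less:
  assumes gb: "good_boundary a n gN gE gS gW" "a \<le> 0"
    and W: "W \<in> Pset a n gN 1" and "2 \<le> c" "c \<le> n" "t < pcol gN c"
  shows "W t < c"
proof (rule ccontr)
  assume "\<not> W t < c"
  have perm: "W permutes {a..n}" and fixed: "\<forall>j\<in>{1<..n}. W (pcol gN j) = j"
    using W by (auto simp: Pset_def perm_on_interval_iff_permutes)
  show False
  proof (cases "W t \<le> n")
    case True
    then have "W (pcol gN (W t)) = W t" using fixed \<open>\<not> W t < c\<close> \<open>2 \<le> c\<close> by simp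
    then have "pcol gN (W t) = t" using permutes_inj[OF perm] by (meson injD)
    moreover have "pcol gN c \<le> pcol gN (W t)"
      using pcol_less_pcol[OF gb, of c "W t"] True \<open>\<not> W t < c\<close> \<open>2 \<le> c\<close> by fastforce
    ultimately show False using \<open>t < pcol gN c\<close> by simp
  next
    case False
    then have "t \<notin> {a..n}" using permutes_in_image[OF perm, of t] by simp
    then have "W t = t" using permutes_not_in[OF perm] by simp
    moreover have "pcol gN c \<le> n" using pcol_le[OF gb] assms(4,5) by simp
    ultimately show False using False \<open>t < pcol gN c\<close> by simp
  qed
qed

lemma Pset_value_below_alpha_seq:
  assumes "good_boundary a n gN gE gS gW" "a \<le> 0" "W \<in> Pset a n gN 1"
    and "m < nat (n - 1)" "t \<le> alpha_seq n gN ! m"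
  shows "W t \<le> int m + 1"
  using Pset_value_less[OF assms(1-3), of "int m + 2" t] assms(4,5) nth_alpha_seq[OF assms(4)]
  by (simp add: zless_nat_eq_int_zless)

theorem lemma4p14:
  fixes a n :: int
    and gN gE gS gW :: "int \<Rightarrow> int option"
    and W U :: "int \<Rightarrow> int"
    and us :: "(int \<Rightarrow> int) list"
  assumes "a \<le> 0" and "0 < n"
    and "good_boundary a n gN gE gS gW"
    and "W \<in> Pset a n gN 1"
    and "\<forall>l \<in> {a..pcol gN 1}. iota a n 1 W l = col_of a n gN l"
    and "\<forall>x y. pcol gN 1 < x \<and> x < y \<and> y \<le> 1 \<longrightarrow> iota a n 1 W y < iota a n 1 W x"
    and "perm_on_interval a n U"
    and "\<forall>l \<in> {a..n}. U l = col_of a n gS l"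
    and "us \<in> Cset U W (alpha_seq n gN)"
  shows "\<forall>i::nat. 1 \<le> i \<and> int i \<le> n - 1 \<longrightarrow>
           {int i + 1..n} \<subseteq> fixI {alpha_seq n gN ! (i - 1)<..n} (us ! (i - 1)) (us ! i)"
proof (intro allI impI subsetI)
  fix i :: nat and v assume i: "1 \<le> i \<and> int i \<le> n - 1" and v: "v \<in> {int i + 1..n}"
  define N where "N = nat (n - 1)"
  have "i - 1 < N" using i by (simp add: N_def zless_nat_eq_int_zless)
  note gb = assms(3,1)
  have us: "us ! 0 = U" "us ! N = W"
    and chain: "\<forall>m<N. (kstep (alpha_seq n gN ! m))\<^sup>*\<^sup>* (us ! m) (us ! Suc m)"
    using assms(9) kchain_imp_kstep_star by (auto simp: Cset_def length_alpha_seq N_def)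
  have W: "W permutes {a..n}" using assms(4) by (simp add: Pset_def perm_on_interval_iff_permutes)
  have perm: "interval_perm (us ! 0)"
    using assms(7) us(1) by (auto simp: interval_perm_def perm_on_interval_iff_permutes)
  have below: "\<forall>t\<le>alpha_seq n gN ! (i - 1). (us ! N) t < v"
    using Pset_value_below_alpha_seq[OF gb assms(4) \<open>i - 1 < N\<close>[unfolded N_def]] us(2) i v
    by (force simp: of_nat_diff)
  have bounded: "\<forall>m<N. alpha_seq n gN ! m \<le> n"
    using alpha_seq_less[OF gb] by (simp add: N_def length_alpha_seq less_imp_le)
  have above: "\<forall>t>n. t \<le> (us ! N) t" using permutes_not_in[OF W] us(2) by simp
  from kstep_sequence_fixI[OF chain perm sorted_alpha_seq[OF gb] length_alpha_seq[of n gN, folded N_def]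
      \<open>i - 1 < N\<close> below bounded above]
  have "v \<in> fixI {alpha_seq n gN ! (i - 1)<..n} (us ! (i - 1)) (us ! Suc (i - 1))"
    using v by simp
  then show "v \<in> fixI {alpha_seq n gN ! (i - 1)<..n} (us ! (i - 1)) (us ! i)" using i by simp
qed

end
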